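(* Let $X\sim\mu$ and let $\xi$ be a random vector in $\mathbb{R}^k$ independent of $X$ with $\mathbb{E}[\xi]=0$ and finite variance. Set $Y=h_\Theta(X)+\xi$ where $h_\Theta(x)=\Theta^\top x$, $\Theta\in\mathbb{R}^{d\times k}$, is $\mathcal{G}$-equivariant. Then for all $W\in\mathbb{R}^{d\times k}$, \[R[f_W]-R[f_{\overline W}]:=\mathbb{E}[\|Y-f_W(X)\|_2^2]-\mathbb{E}[\|Y-f_{\overline W}(X)\|_2^2]=\|\Sigma^{1/2}W^\perp\|_F^2,\] where $\overline W=\Psi(W)$, $W^\perp=W-\Psi(W)$ and $\Sigma=\mathbb{E}[XX^\top]$.
   Context: $\mathcal{G}$ is a compact, second countable, Hausdorff topological group with Haar probability measure $\lambda$, with measurable orthogonal representations $\phi$ on $\mathcal{X}=\mathbb{R}^d$ and $\psi$ on $\mathcal{Y}=\mathbb{R}^k$ (both with Euclidean inner product). $\mu$ is a $\mathcal{G}$-invariant probability measure on $\mathbb{R}^d$ such that $\Sigma=\mathbb{E}[XX^\top]$ ($X\sim\mu$) is finite and positive definite. For $W\in\mathbb{R}^{d\times k}$, $f_W(x)=W^\top x$. A map $h:\mathbb{R}^d\to\mathbb{R}^k$ is $\mathcal{G}$-equivariant if $h(\phi(g)x)=\psi(g)h(x)$ for all $g,x$. $\Psi:\mathbb{R}^{d\times k}\to\mathbb{R}^{d\times k}$ is $\Psi(W)=\int_\mathcal{G}\phi(g)W\psi(g^{-1})\,d\lambda(g)$. $\|\cdot\|_F$ is the Frobenius norm. *)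

theory Defs
  imports "HOL-Analysis.Analysis" "HOL-Probability.Probability" "HOL-Algebra.Group"
begin

definition borel_of :: "'a topology \<Rightarrow> 'a measure" where
  "borel_of T = sigma (topspace T) {U. openin T U}"

definition compact_sc_hausdorff_topological_group :: "('g, 'b) monoid_scheme \<Rightarrow> 'g topology \<Rightarrow> bool" where
  "compact_sc_hausdorff_topological_group G T \<longleftrightarrow>
     group G \<and> topspace T = carrier G \<and>
     continuous_map (prod_topology T T) T (\<lambda>(x, y). x \<otimes>\<^bsub>G\<^esub> y) \<and>
     continuous_map T T (\<lambda>x. inv\<^bsub>G\<^esub> x) \<and>
     compact_space T \<and> second_countable T \<and> Hausdorff_space T"

definition haar_probability :: "('g, 'b) monoid_scheme \<Rightarrow> 'g topology \<Rightarrow> 'g measure \<Rightarrow> bool" where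
  "haar_probability G T lam \<longleftrightarrow>
     prob_space lam \<and> sets lam = sets (borel_of T) \<and> space lam = carrier G \<and>
     (\<forall>g \<in> carrier G. \<forall>A \<in> sets lam. measure lam ((\<lambda>x. g \<otimes>\<^bsub>G\<^esub> x) ` A) = measure lam A)"

definition measurable_orthogonal_rep ::
  "('g, 'b) monoid_scheme \<Rightarrow> 'g measure \<Rightarrow> ('g \<Rightarrow> real^'n^'n) \<Rightarrow> bool" where
  "measurable_orthogonal_rep G lam \<phi> \<longleftrightarrow>
     \<phi> \<in> borel_measurable lam \<and>
     (\<forall>g \<in> carrier G. orthogonal_matrix (\<phi> g)) \<and>
     (\<forall>g \<in> carrier G. \<forall>h \<in> carrier G. \<phi> (g \<otimes>\<^bsub>G\<^esub> h) = \<phi> g ** \<phi> h) \<and>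
     \<phi> \<one>\<^bsub>G\<^esub> = mat 1"

definition equivariant ::
  "('g, 'b) monoid_scheme \<Rightarrow> ('g \<Rightarrow> real^'d^'d) \<Rightarrow> ('g \<Rightarrow> real^'k^'k) \<Rightarrow> (real^'d \<Rightarrow> real^'k) \<Rightarrow> bool" where
  "equivariant G \<phi> \<psi> h \<longleftrightarrow> (\<forall>g \<in> carrier G. \<forall>x. h (\<phi> g *v x) = \<psi> g *v h x)"

definition invariant_measure ::
  "('g, 'b) monoid_scheme \<Rightarrow> ('g \<Rightarrow> real^'d^'d) \<Rightarrow> (real^'d) measure \<Rightarrow> bool" where
  "invariant_measure G \<phi> \<mu> \<longleftrightarrow> (\<forall>g \<in> carrier G. distr \<mu> borel (\<lambda>x. \<phi> g *v x) = \<mu>)"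

definition indep_rvs :: "'w measure \<Rightarrow> ('w \<Rightarrow> 'a::topological_space) \<Rightarrow> ('w \<Rightarrow> 'b::topological_space) \<Rightarrow> bool" where
  "indep_rvs M X Z \<longleftrightarrow>
     (\<forall>A \<in> sets borel. \<forall>B \<in> sets borel.
        measure M (X -` A \<inter> Z -` B \<inter> space M) = measure M (X -` A \<inter> space M) * measure M (Z -` B \<inter> space M))"

definition lin_model :: "real^'k^'d \<Rightarrow> real^'d \<Rightarrow> real^'k" where
  "lin_model W x = transpose W *v x"

definition Psi ::
  "('g, 'b) monoid_scheme \<Rightarrow> 'g measure \<Rightarrow> ('g \<Rightarrow> real^'d^'d) \<Rightarrow> ('g \<Rightarrow> real^'k^'k) \<Rightarrow> real^'k^'d \<Rightarrow> real^'k^'d" where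
  "Psi G lam \<phi> \<psi> W = (\<integral>g. \<phi> g ** W ** \<psi> (inv\<^bsub>G\<^esub> g) \<partial>lam)"

definition outer :: "real^'d \<Rightarrow> real^'d \<Rightarrow> real^'d^'d" where
  "outer x y = (\<chi> i j. x $ i * y $ j)"

definition frobenius_norm :: "real^'k^'d \<Rightarrow> real" where
  "frobenius_norm A = sqrt (\<Sum>i\<in>UNIV. \<Sum>j\<in>UNIV. (A $ i $ j)^2)"

definition symmetric_matrix :: "real^'n^'n \<Rightarrow> bool" where
  "symmetric_matrix A \<longleftrightarrow> transpose A = A"

definition psd_matrix :: "real^'n^'n \<Rightarrow> bool" where
  "psd_matrix A \<longleftrightarrow> symmetric_matrix A \<and> (\<forall>x. 0 \<le> x \<bullet> (A *v x))"

definition pd_matrix :: "real^'n^'n \<Rightarrow> bool" where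
  "pd_matrix A \<longleftrightarrow> symmetric_matrix A \<and> (\<forall>x. x \<noteq> 0 \<longrightarrow> 0 < x \<bullet> (A *v x))"

(* the (unique) positive semidefinite square root *)
definition matrix_sqrt :: "real^'n^'n \<Rightarrow> real^'n^'n" where
  "matrix_sqrt A = (THE S. psd_matrix S \<and> S ** S = A)"

end

theory Submission
  imports Defs
begin

text \<open>
  For any U, Y - f_U(X) = (Theta - U)^T X + xi, and independence together with E xi = 0 kills
  the cross term, so R[f_U] = tr((Theta - U)^T Sigma (Theta - U)) + E|xi|^2.
  Invariance of mu makes Sigma commute with every phi(g), and left invariance of the Haar
  measure makes Psi(W) equivariant. Together they show that Psi is the orthogonal projection
  onto the equivariant matrices for the inner product tr(A^T Sigma B): for every equivariant V,
  tr(V^T Sigma Psi(W)) = tr(V^T Sigma W). Since Theta - Psi(W) is equivariant, the claim is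
  Pythagoras' theorem for this inner product, with tr(D^T Sigma D) = |Sigma^(1/2) D|_F^2.
\<close>

section \<open>Spectral theorem and positive semidefinite square roots\<close>

lemma outer_mult_vector: "outer x y *v z = (y \<bullet> z) *\<^sub>R x"
  by (simp add: outer_def matrix_vector_mult_def inner_vec_def vec_eq_iff sum_distrib_left mult_ac)

lemma sum_matrix_vector_mult:
  "finite I \<Longrightarrow> (\<Sum>i\<in>I. A i :: 'a::semiring_1^'n^'m) *v x = (\<Sum>i\<in>I. A i *v x)"
  by (induction I rule: finite_induct) (auto simp: matrix_vector_mult_add_rdistrib)

lemma matrix_eq_on_spanning_set:
  fixes A C :: "real^'n^'m"
  assumes "span B = UNIV" and "\<And>b. b \<in> B \<Longrightarrow> A *v b = C *v b"
  shows "A = C"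
proof -
  have "A *v x = C *v x" for x
    by (rule linear_eq_on_span[of "(*v) A" "(*v) C" B]) (use assms in auto)
  then show ?thesis by (simp add: matrix_eq)
qed

lemma symmetric_matrix_inner:
  fixes A :: "real^'n^'n"
  assumes "symmetric_matrix A"
  shows "x \<bullet> (A *v y) = (A *v x) \<bullet> y"
  by (metis assms dot_lmul_matrix symmetric_matrix_def transpose_matrix_vector)

lemma symmetric_matrixI:
  fixes A :: "real^'n^'n"
  assumes "\<And>x y. x \<bullet> (A *v y) = (A *v x) \<bullet> y"
  shows "symmetric_matrix A"
proof -
  have "transpose A *v x = A *v x" for x
    using assms by (metis dot_lmul_matrix transpose_matrix_vector vector_eq_rdot)
  then show ?thesis by (simp add: symmetric_matrix_def matrix_eq)
qed

lemma pd_imp_psd_matrix: "pd_matrix A \<Longrightarrow> psd_matrix A"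
  unfolding pd_matrix_def psd_matrix_def by (metis inner_zero_left less_eq_real_def)

lemma psd_on_subspace_isotropic:
  fixes P :: "real^'n^'n"
  assumes sym: "symmetric_matrix P" and V: "subspace V"
    and psd: "\<And>z. z \<in> V \<Longrightarrow> 0 \<le> z \<bullet> (P *v z)"
    and x: "x \<in> V" and x0: "x \<bullet> (P *v x) = 0" and y: "y \<in> V"
  shows "y \<bullet> (P *v x) = 0"
proof (rule ccontr)
  define c where "c = y \<bullet> (P *v x)"
  define b where "b = y \<bullet> (P *v y)"
  assume "y \<bullet> (P *v x) \<noteq> 0"
  then have c: "c \<noteq> 0" by (simp add: c_def)
  have b: "b \<ge> 0" using psd[OF y] b_def by simp
  \<comment> \<open>the quadratic form is negative at \<open>x + t y\<close> for this \<open>t\<close>\<close>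
  define t where "t = - c / (b + 1)"
  have "x + t *\<^sub>R y \<in> V" using V x y by (simp add: subspace_add subspace_scale)
  then have "0 \<le> (x + t *\<^sub>R y) \<bullet> (P *v (x + t *\<^sub>R y))" by (rule psd)
  also have "\<dots> = x \<bullet> (P *v x) + t * (x \<bullet> (P *v y)) + t * c + t * t * b"
    by (simp add: c_def b_def matrix_vector_right_distrib matrix_vector_mult_scaleR
        inner_add_left inner_add_right algebra_simps)
  also have "x \<bullet> (P *v y) = c"
    unfolding c_def using symmetric_matrix_inner[OF sym, of x y] by (simp add: inner_commute)
  also have "x \<bullet> (P *v x) + t * c + t * c + t * t * b = c\<^sup>2 * (- b - 2) / (b + 1)\<^sup>2"
    using b unfolding t_def x0 by (simp add: divide_simps power2_eq_square) (simp add: algebra_simps)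
  also have "\<dots> < 0" using b c by (intro divide_neg_pos mult_pos_neg) auto
  finally show False by simp
qed

lemma symmetric_invariant_subspace_eigenvector:
  fixes A :: "real^'n^'n"
  assumes sym: "symmetric_matrix A" and V: "subspace V"
    and inv: "\<And>x. x \<in> V \<Longrightarrow> A *v x \<in> V" and ne: "V \<noteq> {0}"
  obtains x where "x \<in> V" "norm x = 1" "A *v x = (x \<bullet> (A *v x)) *\<^sub>R x"
proof -
  let ?S = "sphere 0 1 \<inter> V"
  obtain v where v: "v \<in> V" "v \<noteq> 0" using ne V subspace_0 by blast
  then have "v /\<^sub>R norm v \<in> ?S" using V by (auto simp: subspace_scale)
  moreover have "compact ?S" using V by (intro compact_Int_closed closed_subspace) auto
  moreover have "continuous_on ?S (\<lambda>z. z \<bullet> (A *v z))"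
    by (intro continuous_intros bounded_linear.continuous_on[OF matrix_vector_mul_bounded_linear])
  ultimately obtain x where x: "x \<in> ?S" and max: "\<And>z. z \<in> ?S \<Longrightarrow> z \<bullet> (A *v z) \<le> x \<bullet> (A *v x)"
    using continuous_attains_sup[of ?S] by blast
  \<comment> \<open>a maximiser \<open>x\<close> of the Rayleigh quotient makes \<open>l I - A\<close> positive semidefinite on \<open>V\<close>
    and isotropic at \<open>x\<close>\<close>
  define l where "l = x \<bullet> (A *v x)"
  define P where "P = l *\<^sub>R mat 1 - A"
  have P: "P *v z = l *\<^sub>R z - A *v z" for z
    by (simp add: P_def matrix_vector_mult_diff_rdistrib scaleR_matrix_vector_assoc[symmetric])
  have symP: "symmetric_matrix P"
    using sym by (simp add: symmetric_matrix_def P_def vec_eq_iff transpose_def mat_def)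
  have psdP: "0 \<le> z \<bullet> (P *v z)" if z: "z \<in> V" for z
  proof (cases "z = 0")
    case False
    have "z /\<^sub>R norm z \<in> ?S" using z V False by (auto simp: subspace_scale)
    from max[OF this] have "z \<bullet> (A *v z) \<le> l * (z \<bullet> z)"
      using False by (simp add: l_def matrix_vector_mult_scaleR power2_norm_eq_inner[symmetric]
          divide_simps power2_eq_square)
    then show ?thesis by (simp add: P inner_diff_right)
  qed simp
  have "x \<bullet> x = 1" using x by (simp add: dot_square_norm)
  then have x0: "x \<bullet> (P *v x) = 0" by (simp add: P inner_diff_right l_def)
  have xV: "x \<in> V" using x by simp
  have "P *v x \<in> V" using V inv xV by (simp add: P subspace_diff subspace_scale)
  from psd_on_subspace_isotropic[OF symP V psdP xV x0 this]
  have "(P *v x) \<bullet> (P *v x) = 0" .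
  then have "A *v x = l *\<^sub>R x" by (simp add: P)
  with x that show ?thesis by (auto simp: l_def)
qed

lemma symmetric_matrix_eigenvector_orthogonal:
  fixes A :: "real^'n^'n"
  assumes "symmetric_matrix A" and "A *v x = l *\<^sub>R x" and "x \<bullet> y = 0"
  shows "x \<bullet> (A *v y) = 0"
  using assms symmetric_matrix_inner[of A x y] by simp

lemma symmetric_invariant_subspace_orthonormal_eigenbasis:
  fixes A :: "real^'n^'n"
  assumes sym: "symmetric_matrix A"
  shows "subspace V \<Longrightarrow> (\<And>x. x \<in> V \<Longrightarrow> A *v x \<in> V) \<Longrightarrow>
    \<exists>B. B \<subseteq> V \<and> pairwise orthogonal B \<and> span B = V \<and>
        (\<forall>b\<in>B. norm b = 1 \<and> A *v b = (b \<bullet> (A *v b)) *\<^sub>R b)"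
proof (induction "dim V" arbitrary: V rule: less_induct)
  case less
  show ?case
  proof (cases "V = {0}")
    case True
    then show ?thesis by (intro exI[of _ "{}"]) auto
  next
    case False
    obtain x where x: "x \<in> V" "norm x = 1" "A *v x = (x \<bullet> (A *v x)) *\<^sub>R x"
      using symmetric_invariant_subspace_eigenvector[OF sym less.prems False] by blast
    have x1: "x \<bullet> x = 1" using x by (simp add: dot_square_norm)
    define V' where "V' = V \<inter> {y. x \<bullet> y = 0}"
    have V': "subspace V'" unfolding V'_def by (intro subspace_inter less.prems(1) subspace_hyperplane)
    have "A *v y \<in> V'" if "y \<in> V'" for y
      using that less.prems(2) symmetric_matrix_eigenvector_orthogonal[OF sym x(3)]
      by (simp add: V'_def)
    moreover have "dim V' < dim V"
    proof -
      have "V' \<subset> V" using x(1) x1 unfolding V'_def by force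
      then show ?thesis using V' less.prems(1) by (metis dim_psubset span_eq_iff)
    qed
    ultimately obtain B where B: "B \<subseteq> V'" "pairwise orthogonal B" "span B = V'"
      "\<forall>b\<in>B. norm b = 1 \<and> A *v b = (b \<bullet> (A *v b)) *\<^sub>R b"
      using less.hyps V' by blast
    have "V \<subseteq> span (insert x B)"
    proof
      fix v assume v: "v \<in> V"
      have "v - (x \<bullet> v) *\<^sub>R x \<in> V'"
        using v x(1) x1 less.prems(1) by (simp add: V'_def subspace_diff subspace_scale inner_diff_right)
      then have "(v - (x \<bullet> v) *\<^sub>R x) + (x \<bullet> v) *\<^sub>R x \<in> span (insert x B)"
        using B(3) by (intro span_add span_scale) (auto intro: span_base span_mono[THEN subsetD])
      then show "v \<in> span (insert x B)" by simp
    qed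
    moreover have "span (insert x B) \<subseteq> V"
      using B(1) x(1) less.prems(1) V'_def by (intro span_minimal) auto
    moreover have "pairwise orthogonal (insert x B)"
      using B(1,2) x1 unfolding pairwise_insert V'_def orthogonal_def by (auto simp: inner_commute)
    ultimately show ?thesis
      using B(1,4) x V'_def by (intro exI[of _ "insert x B"] conjI) auto
  qed
qed

lemma psd_sqrt_on_eigenvector:
  fixes S :: "real^'n^'n"
  assumes S: "psd_matrix S" and SS: "S ** S = A" and c: "A *v c = e *\<^sub>R c" and e: "0 \<le> e"
  shows "S *v c = sqrt e *\<^sub>R c"
proof -
  define r where "r = sqrt e"
  define w where "w = S *v c - r *\<^sub>R c"
  have sym: "symmetric_matrix S" using S by (simp add: psd_matrix_def)
  have "S *v w + r *\<^sub>R w = (S ** S) *v c - (r * r) *\<^sub>R c"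
    by (simp add: w_def matrix_vector_mult_scaleR matrix_vector_mul_assoc algebra_simps)
  also have "\<dots> = 0" using SS c e by (simp add: r_def)
  finally have Sw: "S *v w = - r *\<^sub>R w" by (simp add: eq_neg_iff_add_eq_0)
  have "0 \<le> w \<bullet> (S *v w)" using S by (simp add: psd_matrix_def)
  then have "r * (w \<bullet> w) \<le> 0" by (simp add: Sw)
  moreover have "0 \<le> r * (w \<bullet> w)" by (simp add: r_def e)
  ultimately have "r * (w \<bullet> w) = 0" by linarith
  moreover have "w \<bullet> w = 0" if "r = 0"
  proof -
    \<comment> \<open>for the eigenvalue \<open>0\<close>, \<open>w = S c\<close> lies in the kernel of the symmetric \<open>S\<close>\<close>
    have "w \<bullet> w = w \<bullet> (S *v c)" using that by (simp add: w_def)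
    also have "\<dots> = (S *v w) \<bullet> c" by (rule symmetric_matrix_inner[OF sym])
    finally show ?thesis using Sw that by simp
  qed
  ultimately have "w = 0" by fastforce
  then show ?thesis by (simp add: w_def r_def)
qed

lemma psd_matrix_eigenbasis:
  fixes A :: "real^'n^'n"
  assumes "psd_matrix A"
  obtains B where "pairwise orthogonal B" "span B = UNIV" "\<And>b. b \<in> B \<Longrightarrow> norm b = 1"
    "\<And>b. b \<in> B \<Longrightarrow> A *v b = (b \<bullet> (A *v b)) *\<^sub>R b" "\<And>b. 0 \<le> b \<bullet> (A *v b)"
  using symmetric_invariant_subspace_orthonormal_eigenbasis[of A UNIV] assms
  by (auto simp: psd_matrix_def)

lemma psd_sqrt_unique:
  fixes A :: "real^'n^'n"
  assumes A: "psd_matrix A" and S: "psd_matrix S" "S ** S = A" and S': "psd_matrix S'" "S' ** S' = A"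
  shows "S = S'"
proof -
  obtain B where B: "span B = UNIV" "\<And>b. b \<in> B \<Longrightarrow> A *v b = (b \<bullet> (A *v b)) *\<^sub>R b"
    "\<And>b. 0 \<le> b \<bullet> (A *v b)"
    using psd_matrix_eigenbasis[OF A] by metis
  show ?thesis
  proof (rule matrix_eq_on_spanning_set[OF B(1)])
    fix b assume "b \<in> B"
    then show "S *v b = S' *v b"
      using psd_sqrt_on_eigenvector[OF S B(2) B(3)] psd_sqrt_on_eigenvector[OF S' B(2) B(3)] by simp
  qed
qed

lemma psd_sqrt_exists:
  fixes A :: "real^'n^'n"
  assumes A: "psd_matrix A"
  obtains S where "psd_matrix S" "S ** S = A"
proof -
  obtain B where B: "pairwise orthogonal B" "span B = UNIV" "\<And>b. b \<in> B \<Longrightarrow> norm b = 1"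
    "\<And>b. b \<in> B \<Longrightarrow> A *v b = (b \<bullet> (A *v b)) *\<^sub>R b" "\<And>b. 0 \<le> b \<bullet> (A *v b)"
    using psd_matrix_eigenbasis[OF A] by metis
  have fin: "finite B" using B(1) by (rule pairwise_orthogonal_imp_finite)
  define ev where "ev b = b \<bullet> (A *v b)" for b
  define S where "S = (\<Sum>b\<in>B. sqrt (ev b) *\<^sub>R outer b b)"
  have Sv: "S *v y = (\<Sum>b\<in>B. (sqrt (ev b) * (b \<bullet> y)) *\<^sub>R b)" for y
    unfolding S_def sum_matrix_vector_mult[OF fin]
    by (simp add: scaleR_matrix_vector_assoc[symmetric] outer_mult_vector)
  have Sb: "S *v c = sqrt (ev c) *\<^sub>R c" if c: "c \<in> B" for c
  proof -
    have "b \<bullet> c = (if b = c then 1 else 0)" if "b \<in> B" for b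
      using B(1,3) c that by (auto simp: pairwise_def orthogonal_def dot_square_norm)
    then have "S *v c = (\<Sum>b\<in>B. if b = c then sqrt (ev c) *\<^sub>R c else 0)"
      unfolding Sv by (intro sum.cong) auto
    then show ?thesis using fin c by simp
  qed
  have "psd_matrix S"
    unfolding psd_matrix_def
  proof
    show "symmetric_matrix S"
      by (rule symmetric_matrixI) (simp add: Sv inner_sum_left inner_sum_right mult_ac inner_commute)
    have "x \<bullet> (S *v x) = (\<Sum>b\<in>B. sqrt (ev b) * (b \<bullet> x)\<^sup>2)" for x
      by (simp add: Sv inner_sum_right power2_eq_square inner_commute mult_ac)
    then show "\<forall>x. 0 \<le> x \<bullet> (S *v x)"
      using B(5) by (simp add: ev_def sum_nonneg)
  qed
  moreover have "S ** S = A"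
  proof (rule matrix_eq_on_spanning_set[OF B(2)])
    fix c assume "c \<in> B"
    then show "(S ** S) *v c = A *v c"
      using B(4,5) by (simp add: matrix_vector_mul_assoc[symmetric] Sb matrix_vector_mult_scaleR ev_def)
  qed
  ultimately show ?thesis by (rule that)
qed

lemma psd_matrix_sqrt:
  fixes A :: "real^'n^'n"
  assumes "psd_matrix A"
  shows "psd_matrix (matrix_sqrt A)" and "matrix_sqrt A ** matrix_sqrt A = A"
proof -
  obtain S where "psd_matrix S" "S ** S = A" using psd_sqrt_exists[OF assms] .
  then have "psd_matrix (matrix_sqrt A) \<and> matrix_sqrt A ** matrix_sqrt A = A"
    unfolding matrix_sqrt_def by (rule theI[where P = "\<lambda>S. psd_matrix S \<and> S ** S = A", OF conjI])
      (use psd_sqrt_unique[OF assms] \<open>psd_matrix S\<close> \<open>S ** S = A\<close> in blast)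
  then show "psd_matrix (matrix_sqrt A)" "matrix_sqrt A ** matrix_sqrt A = A" by auto
qed

section \<open>Traces\<close>

lemma trace_transpose: "trace (transpose A) = trace A"
  by (simp add: trace_def transpose_def)

lemma transpose_diff: "transpose (A - B :: 'a::ab_group_add^'n^'m) = transpose A - transpose B"
  by (simp add: transpose_def vec_eq_iff)

lemma matrix_add_rdistrib: "((A :: 'a::semiring_1^'n^'m) + B) ** C = A ** C + B ** C"
  by (simp add: matrix_matrix_mult_def vec_eq_iff sum.distrib distrib_right)

lemma matrix_diff_rdistrib: "((A :: 'a::ring_1^'n^'m) - B) ** C = A ** C - B ** C"
  by (simp add: matrix_matrix_mult_def vec_eq_iff sum_subtractf left_diff_distrib)

lemma matrix_diff_ldistrib: "(C :: 'a::ring_1^'n^'m) ** (A - B) = C ** A - C ** B"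
  by (simp add: matrix_matrix_mult_def vec_eq_iff sum_subtractf right_diff_distrib)

lemma bounded_linear_matrix_sandwich:
  "bounded_linear (\<lambda>M. (A :: real^'m^'n) ** (M :: real^'p^'m) ** (B :: real^'q^'p))"
proof -
  have "linear (\<lambda>M. A ** M ** B)"
    by (rule linearI) (simp_all add: matrix_add_ldistrib matrix_add_rdistrib matrix_scalar_ac
        scalar_matrix_assoc)
  then show ?thesis by (rule linear_conv_bounded_linear[THEN iffD1])
qed

lemma bounded_linear_trace: "bounded_linear (trace :: real^'n^'n \<Rightarrow> real)"
proof -
  have "linear (trace :: real^'n^'n \<Rightarrow> real)"
    by (rule linearI) (simp_all add: trace_def sum.distrib sum_distrib_left)
  then show ?thesis by (rule linear_conv_bounded_linear[THEN iffD1])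
qed

lemma bounded_linear_trace_sandwich:
  "bounded_linear (\<lambda>M. trace ((A :: real^'m^'n) ** (M :: real^'p^'m) ** (B :: real^'n^'p)))"
  using bounded_linear_compose[OF bounded_linear_trace bounded_linear_matrix_sandwich] .

lemma bounded_linear_trace_mult_left: "bounded_linear (\<lambda>M. trace ((A :: real^'m^'n) ** M))"
  using bounded_linear_trace_sandwich[of A "mat 1"] by simp

lemma frobenius_norm_sq: "(frobenius_norm A)\<^sup>2 = trace (transpose A ** A)"
proof -
  have "0 \<le> (\<Sum>i\<in>UNIV. \<Sum>j\<in>UNIV. (A $ i $ j)\<^sup>2)" by (intro sum_nonneg) simp
  moreover have "(\<Sum>i\<in>UNIV. \<Sum>j\<in>UNIV. (A $ i $ j)\<^sup>2) = trace (transpose A ** A)"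
    unfolding trace_def matrix_matrix_mult_def transpose_def
    by (simp, subst sum.swap) (simp add: power2_eq_square)
  ultimately show ?thesis by (simp add: frobenius_norm_def)
qed

lemma frobenius_norm_matrix_sqrt_mult:
  assumes "psd_matrix A"
  shows "(frobenius_norm (matrix_sqrt A ** D))\<^sup>2 = trace (transpose D ** A ** D)"
proof -
  have "transpose (matrix_sqrt A) = matrix_sqrt A"
    using psd_matrix_sqrt(1)[OF assms] by (simp add: psd_matrix_def symmetric_matrix_def)
  then have "(frobenius_norm (matrix_sqrt A ** D))\<^sup>2
      = trace (transpose D ** (matrix_sqrt A ** matrix_sqrt A) ** D)"
    by (simp add: frobenius_norm_sq matrix_transpose_mul matrix_mul_assoc)
  then show ?thesis by (simp add: psd_matrix_sqrt(2)[OF assms])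
qed

lemma trace_quadratic_diff:
  fixes S :: "real^'n^'n"
  assumes "symmetric_matrix S"
  shows "trace (transpose (V - D) ** S ** (V - D))
    = trace (transpose V ** S ** V) - 2 * trace (transpose V ** S ** D) + trace (transpose D ** S ** D)"
proof -
  have "trace (transpose D ** S ** V) = trace (transpose (transpose D ** S ** V))"
    by (simp add: trace_transpose)
  also have "\<dots> = trace (transpose V ** S ** D)"
    using assms by (simp add: symmetric_matrix_def matrix_transpose_mul matrix_mul_assoc)
  finally show ?thesis
    by (simp add: transpose_diff matrix_diff_rdistrib matrix_diff_ldistrib trace_sub)
qed

lemma norm_transpose_mult_sq:
  "(norm (transpose U *v x))\<^sup>2 = trace (transpose U ** outer x x ** U)"
  unfolding power2_norm_eq_inner trace_def
  by (simp add: inner_vec_def matrix_vector_mult_def transpose_def matrix_matrix_mult_def outer_def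
      sum_distrib_left sum_distrib_right mult_ac)

lemma outer_matrix_vector_mult: "outer (A *v x) (A *v x) = A ** outer x x ** transpose A"
  by (simp add: outer_def matrix_vector_mult_def transpose_def matrix_matrix_mult_def vec_eq_iff
      sum_distrib_left sum_distrib_right mult_ac)

section \<open>Second moments and the risk of a linear model\<close>

lemma second_moment_commute_orthogonal:
  fixes X :: "'w \<Rightarrow> real^'d" and A :: "real^'d^'d"
  assumes X: "X \<in> borel_measurable M" and law: "distr M borel X = \<mu>"
    and invariant: "distr \<mu> borel (\<lambda>x. A *v x) = \<mu>" and orth: "orthogonal_matrix A"
    and int: "integrable M (\<lambda>\<omega>. outer (X \<omega>) (X \<omega>))"
    and Sigma: "\<Sigma> = (\<integral>\<omega>. outer (X \<omega>) (X \<omega>) \<partial>M)"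
  shows "A ** \<Sigma> = \<Sigma> ** A"
proof -
  have A: "(\<lambda>x. A *v x) \<in> borel_measurable borel"
    by (intro borel_measurable_continuous_onI linear_continuous_on matrix_vector_mul_bounded_linear)
  have outer: "(\<lambda>y. outer y y) \<in> borel_measurable borel"
    unfolding outer_def by (intro borel_measurable_continuous_onI continuous_intros)
  have "A ** \<Sigma> ** transpose A = (\<integral>\<omega>. A ** outer (X \<omega>) (X \<omega>) ** transpose A \<partial>M)"
    unfolding Sigma by (rule integral_bounded_linear[OF bounded_linear_matrix_sandwich int, symmetric])
  also have "\<dots> = (\<integral>\<omega>. outer (A *v X \<omega>) (A *v X \<omega>) \<partial>M)"
    by (simp add: outer_matrix_vector_mult)
  also have "\<dots> = (\<integral>y. outer y y \<partial>distr M borel (\<lambda>\<omega>. A *v X \<omega>))"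
    by (rule integral_distr[symmetric]) (use X A outer in \<open>auto intro: measurable_compose\<close>)
  also have "distr M borel (\<lambda>\<omega>. A *v X \<omega>) = distr M borel X"
    using distr_distr[OF A X] law invariant by (simp add: o_def)
  also have "(\<integral>y. outer y y \<partial>distr M borel X) = \<Sigma>"
    unfolding Sigma by (rule integral_distr[OF X outer])
  finally have "A ** \<Sigma> ** transpose A = \<Sigma>" .
  then have "\<Sigma> ** A = A ** \<Sigma> ** (transpose A ** A)" by (simp add: matrix_mul_assoc)
  then show ?thesis using orth by (simp add: orthogonal_matrix_def)
qed

lemma indep_rvs_components:
  fixes X :: "'w \<Rightarrow> real^'d" and Z :: "'w \<Rightarrow> real^'k"
  assumes M: "prob_space M" and X: "X \<in> borel_measurable M" and Z: "Z \<in> borel_measurable M"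
    and indep: "indep_rvs M X Z"
  shows "prob_space.indep_var M borel (\<lambda>\<omega>. X \<omega> $ i) borel (\<lambda>\<omega>. Z \<omega> $ l)"
proof -
  interpret prob_space M by (rule M)
  have generated: "sigma_sets (space M) {Y -` A \<inter> space M | A. A \<in> sets borel}
      = {Y -` A \<inter> space M | A. A \<in> sets (borel :: real measure)}" for Y :: "'w \<Rightarrow> real"
    using sigma_sets_vimage_commute[of Y "space M" UNIV "sets (borel :: real measure)"]
      sets.sigma_sets_eq[of "borel :: real measure"] by auto
  have Xi: "(\<lambda>\<omega>. X \<omega> $ i) \<in> borel_measurable M" and Zl: "(\<lambda>\<omega>. Z \<omega> $ l) \<in> borel_measurable M"
    using measurable_compose[OF X borel_measurable_nth] measurable_compose[OF Z borel_measurable_nth]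
    by simp_all
  show ?thesis
    unfolding indep_var_eq generated indep_sets2_eq
  proof (intro conjI ballI)
    fix a b
    assume "a \<in> {(\<lambda>\<omega>. X \<omega> $ i) -` A \<inter> space M |A. A \<in> sets borel}"
      and "b \<in> {(\<lambda>\<omega>. Z \<omega> $ l) -` A \<inter> space M |A. A \<in> sets borel}"
    then obtain A B where A: "A \<in> sets borel" "a = X -` ((\<lambda>x. x $ i) -` A) \<inter> space M"
      and B: "B \<in> sets borel" "b = Z -` ((\<lambda>x. x $ l) -` B) \<inter> space M" by auto
    moreover have "(\<lambda>x::real^'d. x $ i) -` A \<in> sets borel" "(\<lambda>x::real^'k. x $ l) -` B \<in> sets borel"
      using measurable_sets[OF borel_measurable_nth] A B by auto
    moreover have "a \<inter> b = X -` ((\<lambda>x. x $ i) -` A) \<inter> Z -` ((\<lambda>x. x $ l) -` B) \<inter> space M"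
      using A B by blast
    ultimately show "prob (a \<inter> b) = prob a * prob b" using indep by (simp add: indep_rvs_def)
  qed (use Xi Zl in \<open>auto simp: measurable_sets\<close>)
qed

lemma indep_mean_zero_product:
  fixes X :: "'w \<Rightarrow> real^'d" and Z :: "'w \<Rightarrow> real^'k"
  assumes M: "prob_space M" and X: "X \<in> borel_measurable M" and Z: "Z \<in> borel_measurable M"
    and indep: "indep_rvs M X Z" and X2: "integrable M (\<lambda>\<omega>. outer (X \<omega>) (X \<omega>))"
    and Z_int: "integrable M Z" and Z_mean: "(\<integral>\<omega>. Z \<omega> \<partial>M) = 0"
  shows "integrable M (\<lambda>\<omega>. X \<omega> $ i * Z \<omega> $ l)" and "(\<integral>\<omega>. X \<omega> $ i * Z \<omega> $ l \<partial>M) = 0"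
proof -
  interpret prob_space M by (rule M)
  have indep_il: "indep_var borel (\<lambda>\<omega>. X \<omega> $ i) borel (\<lambda>\<omega>. Z \<omega> $ l)"
    by (rule indep_rvs_components[OF M X Z indep])
  have "bounded_linear (\<lambda>A::real^'d^'d. A $ i $ i)"
    using bounded_linear_compose[OF bounded_linear_vec_nth bounded_linear_vec_nth] .
  from integrable_bounded_linear[OF this X2]
  have "integrable M (\<lambda>\<omega>. (X \<omega> $ i)\<^sup>2)" by (simp add: outer_def power2_eq_square)
  with measurable_compose[OF X borel_measurable_nth]
  have Xi: "integrable M (\<lambda>\<omega>. X \<omega> $ i)" by (simp add: square_integrable_imp_integrable)
  have Zl: "integrable M (\<lambda>\<omega>. Z \<omega> $ l)"
    by (rule integrable_bounded_linear[OF bounded_linear_vec_nth Z_int])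
  have "(\<integral>\<omega>. Z \<omega> $ l \<partial>M) = 0"
    using integral_bounded_linear[OF bounded_linear_vec_nth Z_int, of l] Z_mean by simp
  then show "integrable M (\<lambda>\<omega>. X \<omega> $ i * Z \<omega> $ l)" "(\<integral>\<omega>. X \<omega> $ i * Z \<omega> $ l \<partial>M) = 0"
    using indep_var_integrable[OF indep_il Xi Zl] indep_var_lebesgue_integral[OF indep_il Xi Zl]
    by simp_all
qed

lemma risk_decomposition:
  fixes X :: "'w \<Rightarrow> real^'d" and Z :: "'w \<Rightarrow> real^'k" and U :: "real^'k^'d"
  assumes M: "prob_space M" and X: "X \<in> borel_measurable M" and Z: "Z \<in> borel_measurable M"
    and indep: "indep_rvs M X Z" and X2: "integrable M (\<lambda>\<omega>. outer (X \<omega>) (X \<omega>))"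
    and Sigma: "\<Sigma> = (\<integral>\<omega>. outer (X \<omega>) (X \<omega>) \<partial>M)"
    and Z_int: "integrable M Z" and Z_mean: "(\<integral>\<omega>. Z \<omega> \<partial>M) = 0"
    and Z2: "integrable M (\<lambda>\<omega>. (norm (Z \<omega>))\<^sup>2)"
  shows "(\<integral>\<omega>. (norm (transpose U *v X \<omega> + Z \<omega>))\<^sup>2 \<partial>M)
    = trace (transpose U ** \<Sigma> ** U) + (\<integral>\<omega>. (norm (Z \<omega>))\<^sup>2 \<partial>M)"
proof -
  define quad where "quad \<omega> = trace (transpose U ** outer (X \<omega>) (X \<omega>) ** U)" for \<omega>
  define cross where "cross \<omega> = (\<Sum>l\<in>UNIV. \<Sum>i\<in>UNIV. U $ i $ l * (X \<omega> $ i * Z \<omega> $ l))" for \<omega>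
  have pointwise: "(norm (transpose U *v X \<omega> + Z \<omega>))\<^sup>2 = quad \<omega> + 2 * cross \<omega> + (norm (Z \<omega>))\<^sup>2"
    for \<omega>
  proof -
    have "(transpose U *v X \<omega>) \<bullet> Z \<omega> = cross \<omega>"
      unfolding cross_def inner_vec_def matrix_vector_mult_def transpose_def
      by (simp add: sum_distrib_right sum_distrib_left mult_ac)
    moreover have "(norm (transpose U *v X \<omega> + Z \<omega>))\<^sup>2
        = (norm (transpose U *v X \<omega>))\<^sup>2 + 2 * ((transpose U *v X \<omega>) \<bullet> Z \<omega>) + (norm (Z \<omega>))\<^sup>2"
      by (simp only: power2_norm_eq_inner inner_add_left inner_add_right inner_commute)
    ultimately show ?thesis by (simp only: quad_def norm_transpose_mult_sq)
  qed
  have quad: "integrable M quad" "integral\<^sup>L M quad = trace (transpose U ** \<Sigma> ** U)"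
    unfolding quad_def Sigma
    by (rule integrable_bounded_linear[OF bounded_linear_trace_sandwich X2],
        rule integral_bounded_linear[OF bounded_linear_trace_sandwich X2])
  have cross: "integrable M cross" "integral\<^sup>L M cross = 0"
    using indep_mean_zero_product[OF M X Z indep X2 Z_int Z_mean] unfolding cross_def
    by (auto intro!: integrable_sum integrable_mult_right simp: integral_sum integrable_mult_right)
  show ?thesis
    unfolding pointwise using quad cross Z2 by (simp add: integrable_mult_right)
qed

section \<open>Haar averages of intertwiners\<close>

lemma measurable_borel_of:
  assumes f: "continuous_map T U f"
  shows "f \<in> measurable (borel_of T) (borel_of U)"
  unfolding borel_of_def
proof (rule measurable_measure_of)
  have space: "space (sigma (topspace T) {V. openin T V}) = topspace T"
    by (rule space_measure_of) (auto dest: openin_subset)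
  show "{V. openin U V} \<subseteq> Pow (topspace U)" by (auto dest: openin_subset)
  show "f \<in> space (sigma (topspace T) {V. openin T V}) \<rightarrow> topspace U"
    unfolding space using f by (rule continuous_map_funspace)
  fix V assume "V \<in> {V. openin U V}"
  then have "openin T {x \<in> topspace T. f x \<in> V}"
    using f by (simp add: openin_continuous_map_preimage)
  moreover have "{x \<in> topspace T. f x \<in> V} = f -` V \<inter> topspace T" by blast
  ultimately show "f -` V \<inter> space (sigma (topspace T) {V. openin T V})
      \<in> sets (sigma (topspace T) {V. openin T V})"
    unfolding space by (subst sets_measure_of) (auto dest: openin_subset)
qed

lemma orthogonal_rep_inv:
  assumes rho: "measurable_orthogonal_rep G lam \<rho>" and "group G" and g: "g \<in> carrier G"
  shows "\<rho> (inv\<^bsub>G\<^esub> g) = transpose (\<rho> g)"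
proof -
  interpret group G by fact
  have "\<rho> g ** \<rho> (inv\<^bsub>G\<^esub> g) = \<rho> (g \<otimes>\<^bsub>G\<^esub> inv\<^bsub>G\<^esub> g)"
    using rho g unfolding measurable_orthogonal_rep_def by (metis inv_closed)
  also have "\<dots> = mat 1"
    using rho g by (simp add: measurable_orthogonal_rep_def)
  finally have "transpose (\<rho> g) = (transpose (\<rho> g) ** \<rho> g) ** \<rho> (inv\<^bsub>G\<^esub> g)"
    by (simp add: matrix_mul_assoc[symmetric])
  also have "transpose (\<rho> g) ** \<rho> g = mat 1"
    using rho g by (simp add: measurable_orthogonal_rep_def orthogonal_matrix)
  finally show ?thesis by simp
qed

lemma norm_orthogonal_matrix:
  fixes Q :: "real^'n^'n"
  assumes "orthogonal_matrix Q"
  shows "norm Q = sqrt (real CARD('n))"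
proof -
  have "Q $ i \<bullet> Q $ i = (Q ** transpose Q) $ i $ i" for i
    by (simp add: matrix_matrix_mult_def transpose_def inner_vec_def)
  then have "Q \<bullet> Q = real CARD('n)"
    using assms by (simp add: orthogonal_matrix_def inner_vec_def mat_def)
  then show ?thesis by (simp add: norm_eq_sqrt_inner)
qed

lemma equivariant_lin_model_iff:
  "equivariant G \<phi> \<psi> (lin_model A) \<longleftrightarrow>
    (\<forall>g\<in>carrier G. transpose A ** \<phi> g = \<psi> g ** transpose A)"
  unfolding equivariant_def lin_model_def
  by (simp add: matrix_eq matrix_vector_mul_assoc del: transpose_matrix_vector)

lemma equivariant_lin_model_diff:
  "equivariant G \<phi> \<psi> (lin_model A) \<Longrightarrow> equivariant G \<phi> \<psi> (lin_model B) \<Longrightarrow>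
    equivariant G \<phi> \<psi> (lin_model (A - B))"
  unfolding equivariant_lin_model_iff by (simp add: transpose_diff matrix_diff_rdistrib matrix_diff_ldistrib)

locale haar_orthogonal_reps = group G
  for G :: "'g monoid" (structure) +
  fixes T :: "'g topology" and lam :: "'g measure"
    and \<phi> :: "'g \<Rightarrow> real^'d^'d" and \<psi> :: "'g \<Rightarrow> real^'k^'k"
  assumes topspace: "topspace T = carrier G"
    and continuous_mult: "continuous_map (prod_topology T T) T (\<lambda>(x, y). x \<otimes> y)"
    and continuous_inv: "continuous_map T T (\<lambda>x. inv x)"
    and haar: "haar_probability G T lam"
    and phi: "measurable_orthogonal_rep G lam \<phi>"
    and psi: "measurable_orthogonal_rep G lam \<psi>"
begin

sublocale haar_prob: prob_space lam
  using haar by (simp add: haar_probability_def)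

lemma space_haar: "space lam = carrier G"
  using haar by (simp add: haar_probability_def)

lemma measurable_continuous_map: "continuous_map T T f \<Longrightarrow> f \<in> measurable lam lam"
  using haar measurable_borel_of by (simp add: haar_probability_def cong: measurable_cong_sets)

lemma measurable_left_mult:
  assumes h: "h \<in> carrier G"
  shows "(\<lambda>g. h \<otimes> g) \<in> measurable lam lam"
proof (rule measurable_continuous_map)
  have "continuous_map T (prod_topology T T) (\<lambda>g. (h, g))"
    using h topspace by (intro continuous_map_pairedI) (auto simp: id_def[symmetric])
  from continuous_map_compose[OF this continuous_mult]
  show "continuous_map T T (\<lambda>g. h \<otimes> g)" by (simp add: o_def)
qed

lemma measurable_inv: "(\<lambda>g. inv g) \<in> measurable lam lam"
  using continuous_inv by (rule measurable_continuous_map)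

lemma distr_left_mult:
  assumes h: "h \<in> carrier G"
  shows "distr lam lam (\<lambda>g. h \<otimes> g) = lam"
proof (rule measure_eqI)
  fix A assume "A \<in> sets (distr lam lam (\<lambda>g. h \<otimes> g))"
  then have A: "A \<in> sets lam" by simp
  then have "A \<subseteq> carrier G" using sets.sets_into_space space_haar by blast
  then have "(\<lambda>g. h \<otimes> g) -` A \<inter> space lam = (\<lambda>x. inv h \<otimes> x) ` A"
    using h by (auto simp: space_haar m_assoc[symmetric] intro!: image_eqI[where x = "h \<otimes> _"])
  moreover have "measure lam ((\<lambda>x. inv h \<otimes> x) ` A) = measure lam A"
    using haar h A by (simp add: haar_probability_def)
  ultimately show "emeasure (distr lam lam (\<lambda>g. h \<otimes> g)) A = emeasure lam A"
    using emeasure_distr[OF measurable_left_mult[OF h] A] by (simp add: haar_prob.emeasure_eq_measure)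
qed simp

lemma integral_left_mult:
  fixes f :: "'g \<Rightarrow> 'b::{banach, second_countable_topology}"
  assumes "h \<in> carrier G" and "f \<in> borel_measurable lam"
  shows "(\<integral>g. f (h \<otimes> g) \<partial>lam) = (\<integral>g. f g \<partial>lam)"
  using integral_distr[OF measurable_left_mult assms(2)] distr_left_mult assms(1) by simp

lemma integrable_Psi_integrand: "integrable lam (\<lambda>g. \<phi> g ** W ** \<psi> (inv g))"
proof -
  let ?K = "cball (0::real^'d^'d) (sqrt CARD('d)) \<times> cball (0::real^'k^'k) (sqrt CARD('k))"
  have cont: "continuous_on UNIV (\<lambda>p. fst p ** W ** snd p :: real^'k^'d)"
    unfolding matrix_matrix_mult_def by (intro continuous_intros)
  have "compact ((\<lambda>p. fst p ** W ** snd p) ` ?K)"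
    by (intro compact_continuous_image continuous_on_subset[OF cont] compact_Times compact_cball) auto
  then have "bounded ((\<lambda>p. fst p ** W ** snd p) ` ?K)" by (rule compact_imp_bounded)
  then obtain B where B: "\<And>p. p \<in> ?K \<Longrightarrow> norm (fst p ** W ** snd p) \<le> B"
    unfolding bounded_iff by blast
  have "(\<lambda>g. \<psi> (inv g)) \<in> borel_measurable lam"
    using measurable_compose[OF measurable_inv] psi by (auto simp: measurable_orthogonal_rep_def)
  then have "(\<lambda>g. \<phi> g ** W ** \<psi> (inv g)) \<in> borel_measurable lam"
    using borel_measurable_continuous_Pair[OF _ _ cont] phi by (auto simp: measurable_orthogonal_rep_def)
  moreover have "norm (\<phi> g ** W ** \<psi> (inv g)) \<le> B" if "g \<in> space lam" for g
  proof -
    have "orthogonal_matrix (\<phi> g)" "orthogonal_matrix (\<psi> (inv g))"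
      using phi psi that by (simp_all add: measurable_orthogonal_rep_def space_haar)
    then show ?thesis using B[of "(\<phi> g, \<psi> (inv g))"] by (simp add: norm_orthogonal_matrix)
  qed
  ultimately show ?thesis by (intro haar_prob.integrable_const_bound[where B = B]) auto
qed

lemma Psi_conj:
  assumes h: "h \<in> carrier G"
  shows "\<phi> h ** Psi G lam \<phi> \<psi> W ** transpose (\<psi> h) = Psi G lam \<phi> \<psi> W"
proof -
  have "\<phi> h ** Psi G lam \<phi> \<psi> W ** transpose (\<psi> h)
      = (\<integral>g. \<phi> h ** (\<phi> g ** W ** \<psi> (inv g)) ** transpose (\<psi> h) \<partial>lam)"
    unfolding Psi_def
    by (rule integral_bounded_linear[OF bounded_linear_matrix_sandwich integrable_Psi_integrand, symmetric])
  also have "\<dots> = (\<integral>g. \<phi> (h \<otimes> g) ** W ** \<psi> (inv (h \<otimes> g)) \<partial>lam)"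
  proof (rule Bochner_Integration.integral_cong[OF refl])
    fix g assume "g \<in> space lam"
    then have g: "g \<in> carrier G" by (simp add: space_haar)
    then show "\<phi> h ** (\<phi> g ** W ** \<psi> (inv g)) ** transpose (\<psi> h)
        = \<phi> (h \<otimes> g) ** W ** \<psi> (inv (h \<otimes> g))"
      using h phi psi orthogonal_rep_inv[OF psi is_group h]
      by (simp add: inv_mult_group measurable_orthogonal_rep_def matrix_mul_assoc)
  qed
  also have "\<dots> = Psi G lam \<phi> \<psi> W"
    unfolding Psi_def using h borel_measurable_integrable[OF integrable_Psi_integrand]
    by (rule integral_left_mult)
  finally show ?thesis .
qed

lemma equivariant_Psi: "equivariant G \<phi> \<psi> (lin_model (Psi G lam \<phi> \<psi> W))"
  unfolding equivariant_lin_model_iff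
proof
  fix h assume h: "h \<in> carrier G"
  define P where "P = Psi G lam \<phi> \<psi> W"
  have "transpose (\<phi> h) ** \<phi> h = mat 1"
    using phi h by (simp add: measurable_orthogonal_rep_def orthogonal_matrix_def)
  then have "transpose (\<phi> h) ** P = transpose (\<phi> h) ** (\<phi> h ** P ** transpose (\<psi> h))"
    by (simp add: Psi_conj[OF h] P_def)
  also have "\<dots> = P ** transpose (\<psi> h)"
    using \<open>transpose (\<phi> h) ** \<phi> h = mat 1\<close> by (simp add: matrix_mul_assoc)
  finally have "transpose (transpose P ** \<phi> h) = transpose (\<psi> h ** transpose P)"
    by (simp add: matrix_transpose_mul)
  then show "transpose P ** \<phi> h = \<psi> h ** transpose P" by simp
qed

lemma trace_Psi_equivariant:
  assumes V: "equivariant G \<phi> \<psi> (lin_model V)" and S: "\<And>g. g \<in> carrier G \<Longrightarrow> \<phi> g ** S = S ** \<phi> g"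
  shows "trace (transpose V ** S ** Psi G lam \<phi> \<psi> W) = trace (transpose V ** S ** W)"
proof -
  have "trace (transpose V ** S ** (\<phi> g ** W ** \<psi> (inv g))) = trace (transpose V ** S ** W)"
    if g: "g \<in> carrier G" for g
  proof -
    have "transpose V ** S ** \<phi> g = \<psi> g ** transpose V ** S"
      using S[OF g] V g by (metis equivariant_lin_model_iff matrix_mul_assoc)
    moreover have "\<psi> (inv g) ** \<psi> g = mat 1"
      using orthogonal_rep_inv[OF psi is_group g] psi g
      by (simp add: measurable_orthogonal_rep_def orthogonal_matrix_def)
    moreover have "trace (transpose V ** S ** (\<phi> g ** W ** \<psi> (inv g)))
        = trace (\<psi> (inv g) ** (transpose V ** S ** \<phi> g ** W))"
      by (metis matrix_mul_assoc trace_mul_sym)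
    ultimately show ?thesis by (simp add: matrix_mul_assoc)
  qed
  then have "(\<integral>g. trace (transpose V ** S ** (\<phi> g ** W ** \<psi> (inv g))) \<partial>lam)
      = (\<integral>g. trace (transpose V ** S ** W) \<partial>lam)"
    by (intro Bochner_Integration.integral_cong) (auto simp: space_haar)
  moreover have "trace (transpose V ** S ** Psi G lam \<phi> \<psi> W)
      = (\<integral>g. trace (transpose V ** S ** (\<phi> g ** W ** \<psi> (inv g))) \<partial>lam)"
    unfolding Psi_def
    by (rule integral_bounded_linear[OF bounded_linear_trace_mult_left integrable_Psi_integrand, symmetric])
  ultimately show ?thesis by (simp add: haar_prob.prob_space)
qed

end

theorem proposition4p6:
  fixes G :: "'g monoid" and T :: "'g topology" and lam :: "'g measure"
    and \<phi> :: "'g \<Rightarrow> real^'d^'d" and \<psi> :: "'g \<Rightarrow> real^'k^'k"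
    and M :: "'\<omega> measure" and \<mu> :: "(real^'d) measure"
    and X :: "'\<omega> \<Rightarrow> real^'d" and \<xi> :: "'\<omega> \<Rightarrow> real^'k" and Y :: "'\<omega> \<Rightarrow> real^'k"
    and \<Theta> W :: "real^'k^'d" and \<Sigma> :: "real^'d^'d"
  assumes G: "compact_sc_hausdorff_topological_group G T"
    and lam: "haar_probability G T lam"
    and phi: "measurable_orthogonal_rep G lam \<phi>"
    and psi: "measurable_orthogonal_rep G lam \<psi>"
    and M: "prob_space M"
    and X: "X \<in> borel_measurable M" and X_distr: "distr M borel X = \<mu>"
    and mu_inv: "invariant_measure G \<phi> \<mu>"
    and Sigma_finite: "integrable M (\<lambda>\<omega>. outer (X \<omega>) (X \<omega>))"
    and Sigma_def: "\<Sigma> = (\<integral>\<omega>. outer (X \<omega>) (X \<omega>) \<partial>M)"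
    and Sigma_pd: "pd_matrix \<Sigma>"
    and xi: "\<xi> \<in> borel_measurable M"
    and indep: "indep_rvs M X \<xi>"
    and xi_mean: "integrable M \<xi>" "(\<integral>\<omega>. \<xi> \<omega> \<partial>M) = 0"
    and xi_var: "integrable M (\<lambda>\<omega>. (norm (\<xi> \<omega>))\<^sup>2)"
    and Theta_eq: "equivariant G \<phi> \<psi> (lin_model \<Theta>)"
    and Y_def: "\<And>\<omega>. Y \<omega> = lin_model \<Theta> (X \<omega>) + \<xi> \<omega>"
  shows "(\<integral>\<omega>. (norm (Y \<omega> - lin_model W (X \<omega>)))\<^sup>2 \<partial>M)
         - (\<integral>\<omega>. (norm (Y \<omega> - lin_model (Psi G lam \<phi> \<psi> W) (X \<omega>)))\<^sup>2 \<partial>M)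
       = (frobenius_norm (matrix_sqrt \<Sigma> ** (W - Psi G lam \<phi> \<psi> W)))\<^sup>2"
proof -
  interpret haar_orthogonal_reps G T lam \<phi> \<psi>
    using G lam phi psi unfolding compact_sc_hausdorff_topological_group_def
    by (intro haar_orthogonal_reps.intro haar_orthogonal_reps_axioms.intro) auto
  define V where "V = \<Theta> - Psi G lam \<phi> \<psi> W"
  define D where "D = W - Psi G lam \<phi> \<psi> W"
  have risk: "(\<integral>\<omega>. (norm (Y \<omega> - lin_model U (X \<omega>)))\<^sup>2 \<partial>M)
      = trace (transpose (\<Theta> - U) ** \<Sigma> ** (\<Theta> - U)) + (\<integral>\<omega>. (norm (\<xi> \<omega>))\<^sup>2 \<partial>M)" for U
  proof -
    have "Y \<omega> - lin_model U (X \<omega>) = transpose (\<Theta> - U) *v X \<omega> + \<xi> \<omega>" for \<omega>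
      by (simp add: Y_def lin_model_def transpose_diff matrix_vector_mult_diff_rdistrib)
    then show ?thesis
      using risk_decomposition[OF M X xi indep Sigma_finite Sigma_def xi_mean xi_var] by simp
  qed
  have "\<phi> g ** \<Sigma> = \<Sigma> ** \<phi> g" if "g \<in> carrier G" for g
    using that phi mu_inv
    by (intro second_moment_commute_orthogonal[OF X X_distr _ _ Sigma_finite Sigma_def])
      (auto simp: invariant_measure_def measurable_orthogonal_rep_def)
  moreover have "equivariant G \<phi> \<psi> (lin_model V)"
    unfolding V_def using Theta_eq equivariant_Psi by (rule equivariant_lin_model_diff)
  ultimately have "trace (transpose V ** \<Sigma> ** D) = 0"
    by (simp add: D_def trace_Psi_equivariant matrix_diff_ldistrib trace_sub)
  moreover have "\<Theta> - W = V - D" and "\<Theta> - Psi G lam \<phi> \<psi> W = V"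
    by (simp_all add: V_def D_def)
  ultimately show ?thesis
    using Sigma_pd trace_quadratic_diff[of \<Sigma> V D]
    by (simp add: risk pd_matrix_def D_def[symmetric] frobenius_norm_matrix_sqrt_mult pd_imp_psd_matrix)
qed

end
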